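(* For every general channel $\mathbf W$ and every real $R$, \[ C_p(R\mid\mathbf W)=\inf_{\mathbf P}\lim_{\gamma\downarrow0}I_p(R-\gamma\mid\mathbf P,\mathbf W)=\inf_{\mathbf P}\sup_{\mathbf Q}\lim_{\gamma\downarrow0}J_p(R-\gamma\mid\mathbf P,\mathbf Q,\mathbf W), \] and for every $0\le\epsilon<1$, \[ C(\epsilon\mid\mathbf W)=\sup_{\mathbf P}I(\epsilon\mid\mathbf P,\mathbf W)=\sup_{\mathbf P}\inf_{\mathbf Q}J(\epsilon\mid\mathbf P,\mathbf Q,\mathbf W). \]
   Context: A general channel $\mathbf W=\{W^n\}_{n\ge1}$ consists of finite (or countable) input sets $\mathcal X_n$, output sets $\mathcal Y_n$ and conditional distributions $W^n_x=W^n(\cdot|x)$ on $\mathcal Y_n$, $x\in\mathcal X_n$. $\mathbf P=\{P^n\}$ ranges over sequences of distributions on $\mathcal X_n$, $\mathbf Q=\{Q^n\}$ over sequences of distributions on $\mathcal Y_n$; $W^n_{P^n}(y)=\sum_xP^n(x)W^n_x(y)$. Logarithms natural. Define $I_p(R|\mathbf P,\mathbf W)=\limsup_n\sum_xP^n(x)W^n_x\{y:\frac1n\log\frac{W^n_x(y)}{W^n_{P^n}(y)}<R\}$, $I(\epsilon|\mathbf P,\mathbf W)=\sup\{R: I_p(R|\mathbf P,\mathbf W)\le\epsilon\}$, $J_p(R|\mathbf P,\mathbf Q,\mathbf W)=\limsup_n\sum_xP^n(x)W^n_x\{y:\frac1n\log\frac{W^n_x(y)}{Q^n(y)}<R\}$,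 $J(\epsilon|\mathbf P,\mathbf Q,\mathbf W)=\sup\{R:J_p(R|\mathbf P,\mathbf Q,\mathbf W)\le\epsilon\}$. A code for $W^n$ is $\Phi=(N,\phi,\{\mathcal D_i\}_{i=1}^N)$, $\phi:\{1..N\}\to\mathcal X_n$, pairwise disjoint $\mathcal D_i\subset\mathcal Y_n$; $|\Phi|=N$; $P_{e,W^n}(\Phi)=\frac1N\sum_i(1-W^n_{\phi(i)}(\mathcal D_i))$. Over all code sequences $\{\Phi_n\}$: $C_p(R|\mathbf W)=\inf\{\limsup_nP_{e,W^n}(\Phi_n):\liminf_n\frac1n\log|\Phi_n|\ge R\}$, $C(\epsilon|\mathbf W)=\sup\{\liminf_n\frac1n\log|\Phi_n|:\limsup_nP_{e,W^n}(\Phi_n)\le\epsilon\}$. *)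

theory Defs
  imports "HOL-Probability.Probability"
begin

definition channel :: "(nat \<Rightarrow> 'a set) \<Rightarrow> (nat \<Rightarrow> 'b set) \<Rightarrow> (nat \<Rightarrow> 'a \<Rightarrow> 'b pmf) \<Rightarrow> bool" where
  "channel X Y W \<longleftrightarrow> (\<forall>n. countable (X n) \<and> countable (Y n) \<and> X n \<noteq> {} \<and>
      (\<forall>x\<in>X n. set_pmf (W n x) \<subseteq> Y n))"

definition input_seqs :: "(nat \<Rightarrow> 'a set) \<Rightarrow> (nat \<Rightarrow> 'a pmf) set" where
  "input_seqs X = {P. \<forall>n. set_pmf (P n) \<subseteq> X n}"

definition output_seqs :: "(nat \<Rightarrow> 'b set) \<Rightarrow> (nat \<Rightarrow> 'b pmf) set" where
  "output_seqs Y = {Q. \<forall>n. set_pmf (Q n) \<subseteq> Y n}"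

definition out_dist :: "'a pmf \<Rightarrow> ('a \<Rightarrow> 'b pmf) \<Rightarrow> 'b pmf" where
  "out_dist P V = bind_pmf P V"

definition Ip :: "(nat \<Rightarrow> 'a \<Rightarrow> 'b pmf) \<Rightarrow> (nat \<Rightarrow> 'a pmf) \<Rightarrow> real \<Rightarrow> ereal" where
  "Ip W P R = limsup (\<lambda>n. ereal (measure_pmf.expectation (P n) (\<lambda>x.
      measure_pmf.prob (W n x)
        {y. ln (pmf (W n x) y / pmf (out_dist (P n) (W n)) y) / real n < R})))"

definition I_eps :: "(nat \<Rightarrow> 'a \<Rightarrow> 'b pmf) \<Rightarrow> (nat \<Rightarrow> 'a pmf) \<Rightarrow> real \<Rightarrow> ereal" where
  "I_eps W P \<epsilon> = Sup {ereal R | R. Ip W P R \<le> ereal \<epsilon>}"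

text \<open>J_p(R|P,Q,W).  Where Q^n(y) = 0 the information density is +infinity, hence
  such y never satisfy the event.\<close>
definition Jp :: "(nat \<Rightarrow> 'a \<Rightarrow> 'b pmf) \<Rightarrow> (nat \<Rightarrow> 'a pmf) \<Rightarrow> (nat \<Rightarrow> 'b pmf) \<Rightarrow> real \<Rightarrow> ereal" where
  "Jp W P Q R = limsup (\<lambda>n. ereal (measure_pmf.expectation (P n) (\<lambda>x.
      measure_pmf.prob (W n x)
        {y. 0 < pmf (Q n) y \<and> ln (pmf (W n x) y / pmf (Q n) y) / real n < R})))"

definition J_eps :: "(nat \<Rightarrow> 'a \<Rightarrow> 'b pmf) \<Rightarrow> (nat \<Rightarrow> 'a pmf) \<Rightarrow> (nat \<Rightarrow> 'b pmf) \<Rightarrow> real \<Rightarrow> ereal" where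
  "J_eps W P Q \<epsilon> = Sup {ereal R | R. Jp W P Q R \<le> ereal \<epsilon>}"

text \<open>A code for W^n: (N, phi, D) with messages 1..N, codewords phi i in X n and
  pairwise disjoint decoding sets D i contained in Y n.\<close>
type_synonym ('a, 'b) code = "nat \<times> (nat \<Rightarrow> 'a) \<times> (nat \<Rightarrow> 'b set)"

definition is_code :: "'a set \<Rightarrow> 'b set \<Rightarrow> ('a, 'b) code \<Rightarrow> bool" where
  "is_code Xn Yn c = (case c of (N, \<phi>, D) \<Rightarrow>
      1 \<le> N \<and> (\<forall>i\<in>{1..N}. \<phi> i \<in> Xn \<and> D i \<subseteq> Yn) \<and> disjoint_family_on D {1..N})"

definition code_size :: "('a, 'b) code \<Rightarrow> nat" where
  "code_size c = fst c"

definition err_prob :: "('a \<Rightarrow> 'b pmf) \<Rightarrow> ('a, 'b) code \<Rightarrow> real" where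
  "err_prob V c = (case c of (N, \<phi>, D) \<Rightarrow>
      (\<Sum>i=1..N. 1 - measure_pmf.prob (V (\<phi> i)) (D i)) / real N)"

definition code_seqs :: "(nat \<Rightarrow> 'a set) \<Rightarrow> (nat \<Rightarrow> 'b set) \<Rightarrow> (nat \<Rightarrow> ('a, 'b) code) set" where
  "code_seqs X Y = {\<Phi>. \<forall>n. is_code (X n) (Y n) (\<Phi> n)}"

definition rate :: "(nat \<Rightarrow> ('a, 'b) code) \<Rightarrow> ereal" where
  "rate \<Phi> = liminf (\<lambda>n. ereal (ln (real (code_size (\<Phi> n))) / real n))"

definition error :: "(nat \<Rightarrow> 'a \<Rightarrow> 'b pmf) \<Rightarrow> (nat \<Rightarrow> ('a, 'b) code) \<Rightarrow> ereal" where
  "error W \<Phi> = limsup (\<lambda>n. ereal (err_prob (W n) (\<Phi> n)))"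

definition Cp :: "(nat \<Rightarrow> 'a set) \<Rightarrow> (nat \<Rightarrow> 'b set) \<Rightarrow> (nat \<Rightarrow> 'a \<Rightarrow> 'b pmf) \<Rightarrow> real \<Rightarrow> ereal" where
  "Cp X Y W R = Inf {error W \<Phi> | \<Phi>. \<Phi> \<in> code_seqs X Y \<and> rate \<Phi> \<ge> ereal R}"

definition C_eps :: "(nat \<Rightarrow> 'a set) \<Rightarrow> (nat \<Rightarrow> 'b set) \<Rightarrow> (nat \<Rightarrow> 'a \<Rightarrow> 'b pmf) \<Rightarrow> real \<Rightarrow> ereal" where
  "C_eps X Y W \<epsilon> = Sup {rate \<Phi> | \<Phi>. \<Phi> \<in> code_seqs X Y \<and> error W \<Phi> \<le> ereal \<epsilon>}"

end

theory Submission
  imports Defs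
begin

(* Everything rests on two one-shot bounds
   that relate codes for a single block length n to the information spectrum, i.e. to the
   distribution of the normalized information density ln (W_x(y) / Q(y)) / n:

   - Feinstein's lemma (achievability): for every input distribution P and every M there is a
     code of size M with error at most  Pr[density < r] + M e^(-nr);  the decoding regions are
     packed greedily inside the sets where the density w.r.t. the output law W_P exceeds r.
   - The Verdu-Han converse: for every code of size N and every output distribution Q, under
     the uniform distribution on its codewords  Pr[density < r] - e^(nr) / N  bounds the error.

   These are first proved for arbitrary finite n; then they are passed to sequences: the limit
   gamma -> 0+ is a supremum by monotonicity, achievability of C_p needs a diagonal choice of
   gamma_n -> 0, and the spectrum I_p is the spectrum J_p at Q = W_P.  Each of the four claimed
   equalities finally follows from a cycle of three inequalities; the eps-part only uses
   eps >= 0, not the hypothesis eps < 1. *)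

lemma prob_bind_pmf:
  "measure_pmf.prob (bind_pmf P V) A = measure_pmf.expectation P (\<lambda>x. measure_pmf.prob (V x) A)"
proof -
  have "ennreal (measure_pmf.prob (bind_pmf P V) A)
      = (\<integral>\<^sup>+ x. ennreal (measure_pmf.prob (V x) A) \<partial>measure_pmf P)"
    using emeasure_bind_pmf[of P V A] by (simp add: measure_pmf.emeasure_eq_measure)
  also have "\<dots> = ennreal (measure_pmf.expectation P (\<lambda>x. measure_pmf.prob (V x) A))"
    by (rule nn_integral_eq_integral) (auto intro!: measure_pmf.integrable_const_bound[where B=1])
  finally show ?thesis by (simp add: integral_nonneg_AE)
qed

lemma measure_pmf_prob_le_scaled:
  fixes p q :: "'b pmf"
  assumes "\<And>y. y \<in> A \<Longrightarrow> pmf p y \<le> k * pmf q y" "0 \<le> k"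
  shows "measure_pmf.prob p A \<le> k * measure_pmf.prob q A"
proof -
  have "ennreal (measure_pmf.prob p A) = (\<integral>\<^sup>+ y. ennreal (pmf p y) * indicator A y \<partial>count_space UNIV)"
    by (simp add: measure_pmf.emeasure_eq_measure[symmetric] nn_integral_measure_pmf[symmetric])
  also have "\<dots> \<le> (\<integral>\<^sup>+ y. ennreal k * (ennreal (pmf q y) * indicator A y) \<partial>count_space UNIV)"
    by (rule nn_integral_mono) (use assms in \<open>auto simp: indicator_def ennreal_mult[symmetric]\<close>)
  also have "\<dots> = ennreal k * (\<integral>\<^sup>+ y. ennreal (pmf q y) * indicator A y \<partial>count_space UNIV)"
    by (rule nn_integral_cmult) auto
  also have "\<dots> = ennreal (k * measure_pmf.prob q A)"
    by (simp add: measure_pmf.emeasure_eq_measure[symmetric] nn_integral_measure_pmf[symmetric]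
        ennreal_mult assms)
  finally show ?thesis by (simp add: assms)
qed

lemma integrable_prob [simp, intro]:
  "integrable (measure_pmf P) (\<lambda>x. measure_pmf.prob (V x) (A x))"
  by (rule measure_pmf.integrable_const_bound[where B=1]) auto

lemma measure_pmf_prob_superset_support: "set_pmf p \<subseteq> A \<Longrightarrow> measure_pmf.prob p A = 1"
  by (subst measure_pmf.prob_eq_1) (auto simp: AE_measure_pmf_iff)

lemma info_density_less_iff:
  assumes "0 < a" "0 < b" "0 < n"
  shows "ln (a / b) / real n < r \<longleftrightarrow> a < exp (real n * r) * b"
proof -
  have "ln (a / b) / real n < r \<longleftrightarrow> ln (a / b) < ln (exp (real n * r))"
    using assms by (simp add: pos_divide_less_eq mult.commute)
  also have "\<dots> \<longleftrightarrow> a / b < exp (real n * r)"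
    by (rule ln_less_cancel_iff) (use assms in auto)
  also have "\<dots> \<longleftrightarrow> a < exp (real n * r) * b"
    using assms by (simp add: pos_divide_less_eq)
  finally show ?thesis .
qed

definition Ispec :: "('a \<Rightarrow> 'b pmf) \<Rightarrow> 'a pmf \<Rightarrow> nat \<Rightarrow> real \<Rightarrow> real" where
  "Ispec V P n R = measure_pmf.expectation P (\<lambda>x. measure_pmf.prob (V x)
        {y. ln (pmf (V x) y / pmf (out_dist P V) y) / real n < R})"

definition Jspec :: "('a \<Rightarrow> 'b pmf) \<Rightarrow> 'a pmf \<Rightarrow> 'b pmf \<Rightarrow> nat \<Rightarrow> real \<Rightarrow> real" where
  "Jspec V P Q n R = measure_pmf.expectation P (\<lambda>x. measure_pmf.prob (V x)
        {y. 0 < pmf Q y \<and> ln (pmf (V x) y / pmf Q y) / real n < R})"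

lemma Ip_Ispec: "Ip W P R = limsup (\<lambda>n. ereal (Ispec (W n) (P n) n R))"
  by (simp add: Ip_def Ispec_def)

lemma Jp_Jspec: "Jp W P Q R = limsup (\<lambda>n. ereal (Jspec (W n) (P n) (Q n) n R))"
  by (simp add: Jp_def Jspec_def)

lemma out_dist_pos:
  assumes "x \<in> set_pmf P" "y \<in> set_pmf (V x)"
  shows "0 < pmf (out_dist P V) y"
proof -
  have "y \<in> set_pmf (out_dist P V)" using assms by (auto simp: out_dist_def set_bind_pmf)
  thus ?thesis by (simp add: pmf_positive)
qed

text \<open>The I-spectrum is the J-spectrum taken at the output distribution W_P: the extra
  positivity condition in J holds almost surely, since W_P charges every reachable output.\<close>
lemma Ispec_eq_Jspec_out_dist: "Ispec V P n R = Jspec V P (out_dist P V) n R"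
proof -
  have "measure_pmf.prob (V x) {y. ln (pmf (V x) y / pmf (out_dist P V) y) / real n < R}
      = measure_pmf.prob (V x)
          {y. 0 < pmf (out_dist P V) y \<and> ln (pmf (V x) y / pmf (out_dist P V) y) / real n < R}"
    if x: "x \<in> set_pmf P" for x
  proof -
    have "{y. ln (pmf (V x) y / pmf (out_dist P V) y) / real n < R} \<inter> set_pmf (V x)
        = {y. 0 < pmf (out_dist P V) y \<and> ln (pmf (V x) y / pmf (out_dist P V) y) / real n < R}
            \<inter> set_pmf (V x)"
      using out_dist_pos[OF x] by auto
    thus ?thesis by (subst (1 2) measure_Int_set_pmf[symmetric]) simp
  qed
  thus ?thesis unfolding Ispec_def Jspec_def
    by (intro integral_cong_AE) (auto simp: AE_measure_pmf_iff)
qed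

lemma Ip_eq_Jp_out_dist: "Ip W P R = Jp W P (\<lambda>n. out_dist (P n) (W n)) R"
  by (simp add: Ip_Ispec Jp_Jspec Ispec_eq_Jspec_out_dist)

lemma out_dist_seq:
  assumes "channel X Y W" "P \<in> input_seqs X"
  shows "(\<lambda>n. out_dist (P n) (W n)) \<in> output_seqs Y"
  using assms by (fastforce simp: output_seqs_def input_seqs_def channel_def out_dist_def set_bind_pmf)

text \<open>The spectra are cumulative distribution functions, hence monotone in the threshold.\<close>
lemma Jspec_mono: "R1 \<le> R2 \<Longrightarrow> Jspec V P Q n R1 \<le> Jspec V P Q n R2"
  unfolding Jspec_def
  by (intro integral_mono_AE) (auto intro!: measure_pmf.finite_measure_mono)

lemma Jp_mono: "R1 \<le> R2 \<Longrightarrow> Jp W P Q R1 \<le> Jp W P Q R2"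
  unfolding Jp_Jspec by (intro Limsup_mono always_eventually allI) (simp add: Jspec_mono)

lemma Ip_mono: "R1 \<le> R2 \<Longrightarrow> Ip W P R1 \<le> Ip W P R2"
  unfolding Ip_eq_Jp_out_dist by (rule Jp_mono)

lemma Ip_nonneg: "0 \<le> Ip W P R"
proof -
  have "limsup (\<lambda>n. 0::ereal) \<le> limsup (\<lambda>n. ereal (Ispec (W n) (P n) n R))"
    by (rule Limsup_mono) (auto simp: Ispec_def integral_nonneg_AE)
  thus ?thesis by (simp add: Ip_Ispec Limsup_const)
qed

lemma Lim_at_right_antimono:
  fixes g :: "real \<Rightarrow> ereal"
  assumes mono: "\<And>a b. 0 < a \<Longrightarrow> a \<le> b \<Longrightarrow> g b \<le> g a"
  shows "Lim (at_right 0) g = (SUP \<gamma>\<in>{0<..}. g \<gamma>)"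
proof (rule tendsto_Lim)
  show "at_right (0::real) \<noteq> bot" by simp
  show "(g \<longlongrightarrow> (SUP \<gamma>\<in>{0<..}. g \<gamma>)) (at_right 0)"
  proof (rule order_tendstoI)
    fix a assume "a < (SUP \<gamma>\<in>{0<..}. g \<gamma>)"
    then obtain \<gamma>0 where g0: "0 < \<gamma>0" "a < g \<gamma>0" by (auto simp: less_SUP_iff)
    have "eventually (\<lambda>\<gamma>. 0 < \<gamma> \<and> \<gamma> < \<gamma>0) (at_right (0::real))"
      using g0 by (auto simp: eventually_at_right)
    thus "eventually (\<lambda>\<gamma>. a < g \<gamma>) (at_right 0)"
      by eventually_elim (use g0 mono in \<open>force intro: less_le_trans\<close>)
  next
    fix a assume a: "(SUP \<gamma>\<in>{0<..}. g \<gamma>) < a"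
    have "eventually (\<lambda>\<gamma>. 0 < \<gamma>) (at_right (0::real))" by (simp add: eventually_at_right_less)
    thus "eventually (\<lambda>\<gamma>. g \<gamma> < a) (at_right 0)"
      by eventually_elim (rule le_less_trans[OF SUP_upper a], simp)
  qed
qed

lemma Lim_Ip: "Lim (at_right 0) (\<lambda>\<gamma>. Ip W P (R - \<gamma>)) = (SUP \<gamma>\<in>{0<..}. Ip W P (R - \<gamma>))"
  by (rule Lim_at_right_antimono) (auto intro: Ip_mono)

lemma Lim_Jp: "Lim (at_right 0) (\<lambda>\<gamma>. Jp W P Q (R - \<gamma>)) = (SUP \<gamma>\<in>{0<..}. Jp W P Q (R - \<gamma>))"
  by (rule Lim_at_right_antimono) (auto intro: Jp_mono)

section \<open>Feinstein's lemma\<close>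

text \<open>One step of the greedy packing.\<close>
lemma greedy_step:
  fixes V :: "'a \<Rightarrow> 'b pmf" and T :: "'a \<Rightarrow> 'b set"
  assumes cover: "1 - \<beta> \<le> measure_pmf.expectation P (\<lambda>x. measure_pmf.prob (V x) (T x))"
    and thin: "\<And>x A. x \<in> set_pmf P \<Longrightarrow> A \<subseteq> T x \<Longrightarrow> measure_pmf.prob (bind_pmf P V) A \<le> \<delta>"
    and used: "\<And>i. i \<in> I \<Longrightarrow> \<phi> i \<in> set_pmf P \<and> D i \<subseteq> T (\<phi> i)" and I: "finite I"
    and room: "\<beta> + real (card I) * \<delta> < \<epsilon>"
  shows "\<exists>x\<in>set_pmf P. 1 - \<epsilon> \<le> measure_pmf.prob (V x) (T x - (\<Union>i\<in>I. D i))"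
proof (rule ccontr)
  define U where "U = (\<Union>i\<in>I. D i)"
  assume "\<not> ?thesis"
  hence short: "measure_pmf.prob (V x) (T x - U) \<le> 1 - \<epsilon>" if "x \<in> set_pmf P" for x
    using that by (auto simp: U_def)
  have "1 - \<beta> \<le> measure_pmf.expectation P (\<lambda>x. measure_pmf.prob (V x) (T x))"
    by (rule cover)
  also have "\<dots> \<le> measure_pmf.expectation P (\<lambda>x. (1 - \<epsilon>) + measure_pmf.prob (V x) U)"
  proof (intro integral_mono_AE)
    show "AE x in measure_pmf P. measure_pmf.prob (V x) (T x) \<le> 1 - \<epsilon> + measure_pmf.prob (V x) U"
    proof (unfold AE_measure_pmf_iff, intro ballI)
      fix x assume x: "x \<in> set_pmf P"
      have "measure_pmf.prob (V x) (T x) \<le> measure_pmf.prob (V x) ((T x - U) \<union> U)"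
        by (rule measure_pmf.finite_measure_mono) auto
      also have "\<dots> \<le> measure_pmf.prob (V x) (T x - U) + measure_pmf.prob (V x) U"
        by (rule measure_Un_le) auto
      finally show "measure_pmf.prob (V x) (T x) \<le> 1 - \<epsilon> + measure_pmf.prob (V x) U"
        using short[OF x] by linarith
    qed
  qed auto
  also have "\<dots> = (1 - \<epsilon>) + measure_pmf.prob (bind_pmf P V) U"
    by (subst Bochner_Integration.integral_add) (auto simp: prob_bind_pmf lebesgue_integral_const)
  also have "measure_pmf.prob (bind_pmf P V) U \<le> (\<Sum>i\<in>I. measure_pmf.prob (bind_pmf P V) (D i))"
    unfolding U_def by (rule measure_pmf.finite_measure_subadditive_finite) (auto simp: I)
  also have "\<dots> \<le> (\<Sum>i\<in>I. \<delta>)"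
    by (rule sum_mono) (use used in \<open>force intro: thin\<close>)
  finally show False using room by simp
qed

lemma greedy_packing:
  fixes V :: "'a \<Rightarrow> 'b pmf" and T :: "'a \<Rightarrow> 'b set"
  assumes cover: "1 - \<beta> \<le> measure_pmf.expectation P (\<lambda>x. measure_pmf.prob (V x) (T x))"
    and thin: "\<And>x A. x \<in> set_pmf P \<Longrightarrow> A \<subseteq> T x \<Longrightarrow> measure_pmf.prob (bind_pmf P V) A \<le> \<delta>"
    and \<delta>: "0 < \<delta>"
  shows "\<exists>\<phi> D. (\<forall>i\<in>{1..M}. \<phi> i \<in> set_pmf P \<and> D i \<subseteq> T (\<phi> i) \<and>
                    1 - (\<beta> + real M * \<delta>) \<le> measure_pmf.prob (V (\<phi> i)) (D i))
               \<and> disjoint_family_on D {1..M}"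
proof -
  define \<epsilon> where "\<epsilon> = \<beta> + real M * \<delta>"
  have "\<exists>\<phi> D. (\<forall>i\<in>{1..k}. \<phi> i \<in> set_pmf P \<and> D i \<subseteq> T (\<phi> i) \<and>
                1 - \<epsilon> \<le> measure_pmf.prob (V (\<phi> i)) (D i)) \<and> disjoint_family_on D {1..k}"
    if "k \<le> M" for k
    using that
  proof (induction k)
    case 0
    show ?case by (auto simp: disjoint_family_on_def)
  next
    case (Suc k)
    then obtain \<phi> D where good: "\<forall>i\<in>{1..k}. \<phi> i \<in> set_pmf P \<and> D i \<subseteq> T (\<phi> i) \<and>
                 1 - \<epsilon> \<le> measure_pmf.prob (V (\<phi> i)) (D i)"
      and disj: "disjoint_family_on D {1..k}"
      by auto
    define U where "U = (\<Union>i\<in>{1..k}. D i)"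
    have room: "\<beta> + real (card {1..k}) * \<delta> < \<epsilon>"
      using Suc.prems \<delta> by (simp add: \<epsilon>_def)
    have "\<exists>x\<in>set_pmf P. 1 - \<epsilon> \<le> measure_pmf.prob (V x) (T x - U)"
      unfolding U_def
      by (rule greedy_step[where \<beta>=\<beta> and \<delta>=\<delta> and \<phi>=\<phi> and D=D])
         (use cover thin good room in auto)
    then obtain x where x: "x \<in> set_pmf P" and px: "1 - \<epsilon> \<le> measure_pmf.prob (V x) (T x - U)"
      by blast
    define \<phi>' where "\<phi>' = \<phi>(Suc k := x)"
    define D' where "D' = D(Suc k := T x - U)"
    have range: "{1..Suc k} = insert (Suc k) {1..k}" by auto
    have "\<forall>i\<in>{1..Suc k}. \<phi>' i \<in> set_pmf P \<and> D' i \<subseteq> T (\<phi>' i) \<and>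
                 1 - \<epsilon> \<le> measure_pmf.prob (V (\<phi>' i)) (D' i)"
      using good x px by (auto simp: range \<phi>'_def D'_def)
    moreover have "disjoint_family_on D' {1..k}"
      using disj by (auto simp: D'_def disjoint_family_on_def)
    hence "disjoint_family_on D' (insert (Suc k) {1..k})"
      by (subst disjoint_family_on_insert) (auto simp: D'_def U_def)
    ultimately show ?case unfolding range by blast
  qed
  thus ?thesis unfolding \<epsilon>_def by blast
qed

lemma prob_high_density:
  fixes V :: "'a \<Rightarrow> 'b pmf"
  assumes x: "x \<in> set_pmf P" and VY: "set_pmf (V x) \<subseteq> Yn" and n: "0 < n"
  shows "measure_pmf.prob (V x) {y \<in> Yn. exp (real n * r) * pmf (out_dist P V) y \<le> pmf (V x) y}
       = 1 - measure_pmf.prob (V x) {y. ln (pmf (V x) y / pmf (out_dist P V) y) / real n < r}"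
proof -
  define E where "E = {y. ln (pmf (V x) y / pmf (out_dist P V) y) / real n < r}"
  define T where "T = {y \<in> Yn. exp (real n * r) * pmf (out_dist P V) y \<le> pmf (V x) y}"
  have E_iff: "y \<in> E \<longleftrightarrow> y \<notin> T" if y: "y \<in> set_pmf (V x)" for y
  proof -
    have "0 < pmf (V x) y" "0 < pmf (out_dist P V) y"
      using y out_dist_pos[of x P y V, OF x y] by (auto simp: pmf_positive)
    thus ?thesis using y VY info_density_less_iff[OF _ _ n, of "pmf (V x) y" _ r]
      by (auto simp: E_def T_def mult.commute)
  qed
  have "T \<inter> set_pmf (V x) = (UNIV - E) \<inter> set_pmf (V x)"
    using E_iff by auto
  hence "measure_pmf.prob (V x) T = measure_pmf.prob (V x) (UNIV - E)"
    by (subst (1 2) measure_Int_set_pmf[symmetric]) simp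
  also have "\<dots> = 1 - measure_pmf.prob (V x) E"
    using measure_pmf.prob_compl[of E "V x"] by simp
  finally show ?thesis by (simp add: E_def T_def)
qed

text \<open>Feinstein's lemma: decode inside the sets where the information density with respect to
  W_P is at least r.  Each such set has W_P-probability at most e^(-nr), which makes the
  packing possible with delta = e^(-nr).\<close>
lemma feinstein:
  fixes V :: "'a \<Rightarrow> 'b pmf" and P :: "'a pmf"
  assumes PX: "set_pmf P \<subseteq> Xn" and VY: "\<And>x. x \<in> Xn \<Longrightarrow> set_pmf (V x) \<subseteq> Yn"
    and n: "0 < n" and M: "1 \<le> M"
  shows "\<exists>c. is_code Xn Yn c \<and> code_size c = M \<and>
             err_prob V c \<le> Ispec V P n r + real M / exp (real n * r)"
proof -
  define c0 where "c0 = exp (real n * r)"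
  define Wp where "Wp = out_dist P V"
  define E where "E x = {y. ln (pmf (V x) y / pmf Wp y) / real n < r}" for x
  define T where "T x = {y \<in> Yn. c0 * pmf Wp y \<le> pmf (V x) y}" for x
  have c0: "0 < c0" by (simp add: c0_def)
  have T_compl: "measure_pmf.prob (V x) (T x) = 1 - measure_pmf.prob (V x) (E x)"
    if x: "x \<in> set_pmf P" for x
    unfolding T_def E_def c0_def Wp_def by (rule prob_high_density) (use x VY PX n in auto)
  have cover: "1 - Ispec V P n r \<le> measure_pmf.expectation P (\<lambda>x. measure_pmf.prob (V x) (T x))"
  proof -
    have "measure_pmf.expectation P (\<lambda>x. measure_pmf.prob (V x) (T x))
        = measure_pmf.expectation P (\<lambda>x. 1 - measure_pmf.prob (V x) (E x))"
      by (intro integral_cong_AE) (auto simp: AE_measure_pmf_iff T_compl)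
    also have "\<dots> = 1 - Ispec V P n r"
      by (subst Bochner_Integration.integral_diff)
         (auto simp: lebesgue_integral_const Ispec_def E_def Wp_def)
    finally show ?thesis by simp
  qed
  have thin: "measure_pmf.prob (bind_pmf P V) A \<le> 1 / c0" if "A \<subseteq> T x" for A x
  proof -
    have "measure_pmf.prob Wp A \<le> (1 / c0) * measure_pmf.prob (V x) A"
      by (rule measure_pmf_prob_le_scaled) (use that c0 in \<open>auto simp: T_def field_simps\<close>)
    also have "\<dots> \<le> 1 / c0" using c0 by (simp add: divide_right_mono)
    finally show ?thesis by (simp add: Wp_def out_dist_def)
  qed
  define \<epsilon> where "\<epsilon> = Ispec V P n r + real M * (1 / c0)"
  have "\<exists>\<phi> D. (\<forall>i\<in>{1..M}. \<phi> i \<in> set_pmf P \<and> D i \<subseteq> T (\<phi> i) \<and>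
                 1 - \<epsilon> \<le> measure_pmf.prob (V (\<phi> i)) (D i)) \<and> disjoint_family_on D {1..M}"
    unfolding \<epsilon>_def by (rule greedy_packing) (use cover thin c0 in auto)
  then obtain \<phi> D where good: "\<forall>i\<in>{1..M}. \<phi> i \<in> set_pmf P \<and> D i \<subseteq> T (\<phi> i) \<and>
                 1 - \<epsilon> \<le> measure_pmf.prob (V (\<phi> i)) (D i)" and disj: "disjoint_family_on D {1..M}"
    by blast
  have code: "is_code Xn Yn (M, \<phi>, D)"
    using good disj M PX by (auto simp: is_code_def T_def)
  have "err_prob V (M, \<phi>, D) = (\<Sum>i=1..M. 1 - measure_pmf.prob (V (\<phi> i)) (D i)) / real M"
    by (simp add: err_prob_def)
  also have "\<dots> \<le> (\<Sum>i=1..M. \<epsilon>) / real M"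
    by (intro divide_right_mono sum_mono) (use good in force)+
  also have "\<dots> = \<epsilon>" using M by simp
  finally have "err_prob V (M, \<phi>, D) \<le> Ispec V P n r + real M / exp (real n * r)"
    by (simp add: \<epsilon>_def c0_def)
  with code show ?thesis by (intro exI[of _ "(M, \<phi>, D)"]) (simp add: code_size_def)
qed

section \<open>The Verdu-Han converse\<close>

definition codeword_dist :: "('a, 'b) code \<Rightarrow> 'a pmf" where
  "codeword_dist c = map_pmf (fst (snd c)) (pmf_of_set {1..fst c})"

lemma set_codeword_dist:
  assumes "is_code Xn Yn c"
  shows "set_pmf (codeword_dist c) \<subseteq> Xn"
proof -
  obtain N \<phi> D where c: "c = (N, \<phi>, D)" by (cases c) auto
  have "1 \<le> N" "\<forall>i\<in>{1..N}. \<phi> i \<in> Xn" using assms by (auto simp: is_code_def c)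
  thus ?thesis by (auto simp: codeword_dist_def c)
qed

lemma codeword_dist_seq:
  assumes "\<Phi> \<in> code_seqs X Y"
  shows "(\<lambda>n. codeword_dist (\<Phi> n)) \<in> input_seqs X"
  using assms by (auto simp: code_seqs_def input_seqs_def intro: set_codeword_dist[THEN subsetD])

text \<open>For a single codeword with output law p and decoding set D: the event of low density
  with respect to Q is covered by the decoding error plus the part inside D, and on the latter
  p is at most e^(nr) Q.\<close>
lemma low_density_le_error:
  fixes p Q :: "'b pmf"
  assumes n: "0 < n"
  shows "measure_pmf.prob p {y. 0 < pmf Q y \<and> ln (pmf p y / pmf Q y) / real n < r}
      \<le> (1 - measure_pmf.prob p D) + exp (real n * r) * measure_pmf.prob Q D"
proof -
  define S where "S = {y. 0 < pmf Q y \<and> ln (pmf p y / pmf Q y) / real n < r}"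
  have "measure_pmf.prob p S \<le> measure_pmf.prob p ((S \<inter> D) \<union> (UNIV - D))"
    by (rule measure_pmf.finite_measure_mono) auto
  also have "\<dots> \<le> measure_pmf.prob p (S \<inter> D) + measure_pmf.prob p (UNIV - D)"
    by (rule measure_Un_le) auto
  also have "measure_pmf.prob p (UNIV - D) = 1 - measure_pmf.prob p D"
    using measure_pmf.prob_compl[of D p] by simp
  also have "measure_pmf.prob p (S \<inter> D) \<le> exp (real n * r) * measure_pmf.prob Q (S \<inter> D)"
  proof (rule measure_pmf_prob_le_scaled)
    fix y assume y: "y \<in> S \<inter> D"
    show "pmf p y \<le> exp (real n * r) * pmf Q y"
    proof (cases "pmf p y = 0")
      case False
      hence "0 < pmf p y" by (simp add: order_less_le)
      thus ?thesis using y info_density_less_iff[of "pmf p y" "pmf Q y" n r] n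
        by (simp add: S_def)
    qed simp
  qed simp
  also have "\<dots> \<le> exp (real n * r) * measure_pmf.prob Q D"
    by (intro mult_left_mono measure_pmf.finite_measure_mono) auto
  finally show ?thesis by (simp add: S_def)
qed

text \<open>The Verdu-Han lemma: averaging over the codewords, the disjoint decoding sets have total
  Q-probability at most 1, so the low-density probability exceeds the error by at most
  e^(nr) / N.\<close>
lemma verdu_han_converse:
  fixes V :: "'a \<Rightarrow> 'b pmf"
  assumes code: "is_code Xn Yn c" and n: "0 < n"
  shows "Jspec V (codeword_dist c) Q n r - exp (real n * r) / real (code_size c) \<le> err_prob V c"
proof -
  obtain N \<phi> D where c: "c = (N, \<phi>, D)" by (cases c) auto
  have N: "1 \<le> N" and disj: "disjoint_family_on D {1..N}" using code by (auto simp: is_code_def c)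
  define e where "e = exp (real n * r)"
  define S where "S x = {y. 0 < pmf Q y \<and> ln (pmf (V x) y / pmf Q y) / real n < r}" for x
  have Jspec_c: "Jspec V (codeword_dist c) Q n r
      = (\<Sum>i=1..N. measure_pmf.prob (V (\<phi> i)) (S (\<phi> i))) / real N"
    using N by (simp add: Jspec_def codeword_dist_def c integral_pmf_of_set S_def)
  have packing: "(\<Sum>i=1..N. measure_pmf.prob Q (D i)) \<le> 1"
  proof -
    have "(\<Sum>i=1..N. measure_pmf.prob Q (D i)) = measure_pmf.prob Q (\<Union>i\<in>{1..N}. D i)"
      by (rule measure_pmf.finite_measure_finite_Union[symmetric]) (use disj in auto)
    thus ?thesis by simp
  qed
  have "(\<Sum>i=1..N. measure_pmf.prob (V (\<phi> i)) (S (\<phi> i)))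
      \<le> (\<Sum>i=1..N. (1 - measure_pmf.prob (V (\<phi> i)) (D i)) + e * measure_pmf.prob Q (D i))"
    by (rule sum_mono) (unfold S_def e_def, rule low_density_le_error[OF n])
  also have "\<dots> = (\<Sum>i=1..N. 1 - measure_pmf.prob (V (\<phi> i)) (D i))
                  + e * (\<Sum>i=1..N. measure_pmf.prob Q (D i))"
    by (simp add: sum.distrib sum_distrib_left)
  also have "\<dots> \<le> (\<Sum>i=1..N. 1 - measure_pmf.prob (V (\<phi> i)) (D i)) + e"
    using packing by (simp add: e_def mult_left_le)
  finally have "(\<Sum>i=1..N. measure_pmf.prob (V (\<phi> i)) (S (\<phi> i))) / real N
      \<le> ((\<Sum>i=1..N. 1 - measure_pmf.prob (V (\<phi> i)) (D i)) + e) / real N"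
    by (rule divide_right_mono) simp
  also have "\<dots> = err_prob V c + e / real N"
    by (simp add: err_prob_def c add_divide_distrib)
  finally show ?thesis using Jspec_c by (simp add: c code_size_def e_def)
qed

section \<open>Passing to code sequences\<close>

lemma exp_decay_LIMSEQ: "0 < c \<Longrightarrow> (\<lambda>n. 2 * exp (real n * (- c))) \<longlonglongrightarrow> 0"
proof -
  assume c: "0 < c"
  have "(\<lambda>n. exp (- c) ^ n) \<longlonglongrightarrow> 0" by (rule LIMSEQ_power_zero) (use c in simp)
  hence "(\<lambda>n. 2 * exp (- c) ^ n) \<longlonglongrightarrow> 0" by (rule tendsto_mult_right_zero)
  thus ?thesis by (simp only: exp_of_nat_mult)
qed

text \<open>It lets the gap gamma
  between the code rate and the spectrum threshold shrink to 0 with the block length.\<close>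
lemma diagonal_eventually:
  fixes A :: "nat \<Rightarrow> nat \<Rightarrow> bool"
  assumes ev: "\<And>k. eventually (A k) sequentially"
  shows "\<exists>\<kappa>. filterlim \<kappa> at_top sequentially \<and> eventually (\<lambda>n. A (\<kappa> n) n) sequentially"
proof -
  define G where "G k n \<longleftrightarrow> (\<forall>m\<ge>n. \<forall>j\<le>k. A j m)" for k n
  have G_ex: "\<exists>N. G k N" for k
  proof -
    have "eventually (\<lambda>m. \<forall>j\<in>{..k}. A j m) sequentially"
      by (rule eventually_ball_finite) (auto intro: ev)
    thus ?thesis by (auto simp: G_def eventually_sequentially)
  qed
  have G_mono: "G k n" if "G k N" "N \<le> n" for k N n using that by (auto simp: G_def)
  define \<kappa> where "\<kappa> n = Max (insert 0 {k. k \<le> n \<and> G k n})" for n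
  have fin: "finite (insert 0 {k. k \<le> n \<and> G k n})" for n by auto
  have \<kappa>_ge: "k \<le> \<kappa> n" if "G k n" "k \<le> n" for k n
    unfolding \<kappa>_def by (rule Max_ge[OF fin]) (use that in auto)
  have \<kappa>_mem: "\<kappa> n \<in> insert 0 {k. k \<le> n \<and> G k n}" for n
    unfolding \<kappa>_def by (rule Max_in[OF fin]) auto
  have "filterlim \<kappa> at_top sequentially"
  proof (unfold filterlim_at_top, intro allI)
    fix Z :: nat
    obtain N where "G Z N" using G_ex by auto
    hence "\<forall>n\<ge>max N Z. Z \<le> \<kappa> n" using G_mono \<kappa>_ge by auto
    thus "eventually (\<lambda>n. Z \<le> \<kappa> n) sequentially" unfolding eventually_sequentially by blast
  qed
  moreover have "eventually (\<lambda>n. A (\<kappa> n) n) sequentially"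
  proof -
    obtain N where N: "G 0 N" using G_ex by auto
    have "A (\<kappa> n) n" if "n \<ge> N" for n
    proof -
      have "G (\<kappa> n) n" using \<kappa>_mem[of n] G_mono[OF N that] by auto
      thus ?thesis by (auto simp: G_def)
    qed
    thus ?thesis by (auto simp: eventually_sequentially)
  qed
  ultimately show ?thesis by blast
qed

text \<open>The one-message code: it has rate 0 and never errs.  It witnesses the trivial cases
  R <= 0 for C_p and C_eps >= 0.\<close>
definition trivial_code :: "(nat \<Rightarrow> 'a set) \<Rightarrow> (nat \<Rightarrow> 'b set) \<Rightarrow> nat \<Rightarrow> ('a, 'b) code" where
  "trivial_code X Y n = (1, \<lambda>_. SOME x. x \<in> X n, \<lambda>_. Y n)"

lemma trivial_code:
  assumes "channel X Y W"
  shows "is_code (X n) (Y n) (trivial_code X Y n)" "code_size (trivial_code X Y n) = 1"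
    "err_prob (W n) (trivial_code X Y n) = 0"
proof -
  have "X n \<noteq> {}" using assms by (auto simp: channel_def)
  hence x: "(SOME x. x \<in> X n) \<in> X n" by (auto intro: someI)
  show "is_code (X n) (Y n) (trivial_code X Y n)"
    using x by (simp add: is_code_def trivial_code_def disjoint_family_on_def)
  show "code_size (trivial_code X Y n) = 1" by (simp add: code_size_def trivial_code_def)
  have "set_pmf (W n (SOME x. x \<in> X n)) \<subseteq> Y n" using assms x by (auto simp: channel_def)
  thus "err_prob (W n) (trivial_code X Y n) = 0"
    by (simp add: err_prob_def trivial_code_def measure_pmf_prob_superset_support)
qed

lemma trivial_code_seq:
  assumes "channel X Y W"
  shows "trivial_code X Y \<in> code_seqs X Y" "rate (trivial_code X Y) = 0"
    "error W (trivial_code X Y) = 0"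
  using trivial_code[OF assms]
  by (auto simp: code_seqs_def rate_def error_def Liminf_const Limsup_const zero_ereal_def)

lemma rate_ge_of_lower_bound:
  assumes s: "s \<longlonglongrightarrow> R" and size: "\<And>n. 0 < n \<Longrightarrow> s n \<le> ln (real (code_size (\<Phi> n))) / real n"
  shows "ereal R \<le> rate \<Phi>"
proof -
  have "(\<lambda>n. ereal (s n)) \<longlonglongrightarrow> ereal R" using s by (simp add: lim_ereal)
  hence "liminf (\<lambda>n. ereal (s n)) = ereal R" by (rule lim_imp_Liminf[rotated]) simp
  moreover have "liminf (\<lambda>n. ereal (s n)) \<le> rate \<Phi>" unfolding rate_def
    by (rule Liminf_mono) (use size in \<open>auto simp: eventually_sequentially intro!: exI[of _ 1]\<close>)
  ultimately show ?thesis by simp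
qed

lemma achievability_codes:
  fixes s t :: "nat \<Rightarrow> real" and P :: "nat \<Rightarrow> 'a pmf" and W :: "nat \<Rightarrow> 'a \<Rightarrow> 'b pmf"
  assumes ch: "channel X Y W" and P: "P \<in> input_seqs X" and s: "\<And>n. 0 \<le> s n"
  shows "\<exists>\<Phi>\<in>code_seqs X Y. \<forall>n>0. s n \<le> ln (real (code_size (\<Phi> n))) / real n \<and>
           err_prob (W n) (\<Phi> n) \<le> Ispec (W n) (P n) n (t n) + 2 * exp (real n * (s n - t n))"
proof -
  have "\<exists>c. is_code (X n) (Y n) c \<and> (0 < n \<longrightarrow> s n \<le> ln (real (code_size c)) / real n \<and>
           err_prob (W n) c \<le> Ispec (W n) (P n) n (t n) + 2 * exp (real n * (s n - t n)))" for n
  proof (cases "n = 0")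
    case True thus ?thesis using trivial_code[OF ch] by blast
  next
    case False
    hence n: "0 < n" by simp
    define M where "M = nat \<lceil>exp (real n * s n)\<rceil>"
    have e1: "1 \<le> exp (real n * s n)" using s[of n] by simp
    hence M1: "1 \<le> M" unfolding M_def by linarith
    have M_le: "real M \<le> 2 * exp (real n * s n)" using e1 unfolding M_def
      by (smt (verit) of_nat_nat ceiling_correct ceiling_le_zero)
    have M_ge: "exp (real n * s n) \<le> real M" unfolding M_def
      by (metis of_nat_nat real_nat_ceiling_ge)
    have PX: "set_pmf (P n) \<subseteq> X n" using P by (auto simp: input_seqs_def)
    have VY: "\<And>x. x \<in> X n \<Longrightarrow> set_pmf (W n x) \<subseteq> Y n" using ch by (auto simp: channel_def)
    obtain c where c: "is_code (X n) (Y n) c" "code_size c = M"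
      "err_prob (W n) c \<le> Ispec (W n) (P n) n (t n) + real M / exp (real n * t n)"
      using feinstein[where V="W n" and r="t n", OF PX VY n M1] by blast
    have "real M / exp (real n * t n) \<le> 2 * exp (real n * s n) / exp (real n * t n)"
      by (rule divide_right_mono[OF M_le]) simp
    also have "\<dots> = 2 * exp (real n * (s n - t n))"
      by (simp add: exp_diff right_diff_distrib)
    finally have err: "err_prob (W n) c \<le> Ispec (W n) (P n) n (t n) + 2 * exp (real n * (s n - t n))"
      using c(3) by simp
    have "real n * s n \<le> ln (real M)"
      using M_ge e1 by (metis exp_le_cancel_iff exp_ln less_le_trans zero_less_one)
    hence "s n \<le> ln (real (code_size c)) / real n" using n c(2)
      by (simp add: pos_le_divide_eq mult.commute)
    with c err show ?thesis by blast
  qed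
  then obtain \<Phi> where "\<And>n. is_code (X n) (Y n) (\<Phi> n) \<and>
      (0 < n \<longrightarrow> s n \<le> ln (real (code_size (\<Phi> n))) / real n \<and>
        err_prob (W n) (\<Phi> n) \<le> Ispec (W n) (P n) n (t n) + 2 * exp (real n * (s n - t n)))"
    by metis
  thus ?thesis by (auto simp: code_seqs_def)
qed

text \<open>The Verdu-Han bound along a code sequence: below its rate, the J-spectrum of the codeword
  distributions is dominated by the error, since e^(nr) / N decays exponentially.\<close>
lemma converse_asymptotic:
  assumes \<Phi>: "\<Phi> \<in> code_seqs X Y" and r: "ereal r < rate \<Phi>"
  shows "Jp W (\<lambda>n. codeword_dist (\<Phi> n)) Q r \<le> error W \<Phi>"
proof -
  obtain r2 where r2: "r < r2" "ereal r2 < rate \<Phi>"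
    using ereal_dense2[OF r] by (metis ereal_less(2) less_ereal.simps(1))
  have ev: "eventually (\<lambda>n. ereal r2 < ereal (ln (real (code_size (\<Phi> n))) / real n)) sequentially"
    using r2(2) unfolding rate_def by (rule less_LiminfD)
  have bound: "eventually (\<lambda>n. ereal (Jspec (W n) (codeword_dist (\<Phi> n)) (Q n) n r)
       \<le> ereal (2 * exp (real n * (- (r2 - r)))) + ereal (err_prob (W n) (\<Phi> n))) sequentially"
    using ev eventually_gt_at_top[of 0]
  proof eventually_elim
    case (elim n)
    have code: "is_code (X n) (Y n) (\<Phi> n)" using \<Phi> by (auto simp: code_seqs_def)
    define N where "N = real (code_size (\<Phi> n))"
    have N1: "1 \<le> N" using code by (cases "\<Phi> n") (auto simp: N_def is_code_def code_size_def)
    have "real n * r2 < ln N" using elim by (simp add: N_def pos_less_divide_eq mult.commute)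
    hence N_gt: "exp (real n * r2) < N"
      using N1 by (metis exp_less_cancel_iff exp_ln less_le_trans zero_less_one)
    have "exp (real n * r) / N \<le> exp (real n * r) / exp (real n * r2)"
      using N_gt N1 by (intro divide_left_mono) (auto intro!: mult_pos_pos)
    also have "\<dots> \<le> 2 * exp (real n * (- (r2 - r)))" by (simp add: exp_diff[symmetric] algebra_simps)
    finally show ?case
      using verdu_han_converse[OF code elim(2), of "W n" "Q n" r] by (simp add: N_def)
  qed
  have "Jp W (\<lambda>n. codeword_dist (\<Phi> n)) Q r
      \<le> limsup (\<lambda>n. ereal (2 * exp (real n * (- (r2 - r)))) + ereal (err_prob (W n) (\<Phi> n)))"
    unfolding Jp_Jspec by (rule Limsup_mono[OF bound])
  also have "\<dots> = ereal 0 + error W \<Phi>" unfolding error_def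
    by (rule ereal_limsup_lim_add) (use exp_decay_LIMSEQ[of "r2 - r"] r2 in \<open>auto simp: lim_ereal\<close>)
  finally show ?thesis by (simp add: zero_ereal_def[symmetric])
qed

section \<open>The optimal asymptotic error probability C_p at rate R\<close>

lemma vanishing_gaps:
  assumes R: "0 < R" and L: "(SUP \<gamma>\<in>{0<..}. Ip W P (R - \<gamma>)) < ereal l"
  shows "\<exists>g. g \<longlonglongrightarrow> 0 \<and> (\<forall>n. 0 < g n \<and> g n \<le> R / 3) \<and>
           eventually (\<lambda>n. Ispec (W n) (P n) n (R - g n) + 2 * exp (real n * (- g n)) < l) sequentially"
proof -
  obtain m where m: "(SUP \<gamma>\<in>{0<..}. Ip W P (R - \<gamma>)) < ereal m" "m < l"
    using ereal_dense2[OF L] by (metis less_ereal.simps(1))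
  define \<gamma> where "\<gamma> k = R / (3 * real (Suc k))" for k
  have \<gamma>_pos: "0 < \<gamma> k" for k using R by (simp add: \<gamma>_def)
  have \<gamma>_le: "\<gamma> k \<le> R / 3" for k using R by (simp add: \<gamma>_def field_simps)
  have ev: "eventually (\<lambda>n. Ispec (W n) (P n) n (R - \<gamma> k) + 2 * exp (real n * (- \<gamma> k)) < l)
      sequentially" for k
  proof -
    have "Ip W P (R - \<gamma> k) \<le> (SUP \<gamma>\<in>{0<..}. Ip W P (R - \<gamma>))"
      by (rule SUP_upper) (use \<gamma>_pos in simp)
    hence "limsup (\<lambda>n. ereal (Ispec (W n) (P n) n (R - \<gamma> k))) < ereal m"
      using m by (simp add: Ip_Ispec)
    hence e1: "eventually (\<lambda>n. ereal (Ispec (W n) (P n) n (R - \<gamma> k)) < ereal m) sequentially"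
      by (rule Limsup_lessD)
    have e2: "eventually (\<lambda>n. 2 * exp (real n * (- \<gamma> k)) < l - m) sequentially"
      by (rule order_tendstoD(2)[OF exp_decay_LIMSEQ[OF \<gamma>_pos]]) (use m in simp)
    from e1 e2 show ?thesis by eventually_elim simp
  qed
  obtain \<kappa> where \<kappa>: "filterlim \<kappa> at_top sequentially" and ev_\<kappa>:
    "eventually (\<lambda>n. Ispec (W n) (P n) n (R - \<gamma> (\<kappa> n)) + 2 * exp (real n * (- \<gamma> (\<kappa> n))) < l)
       sequentially"
    using diagonal_eventually[of "\<lambda>k n. Ispec (W n) (P n) n (R - \<gamma> k) + 2 * exp (real n * (- \<gamma> k)) < l",
        OF ev] by blast
  have "(\<lambda>n. R / 3 * inverse (real (Suc (\<kappa> n)))) \<longlonglongrightarrow> R / 3 * 0"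
    by (intro tendsto_intros filterlim_compose[OF LIMSEQ_inverse_real_of_nat \<kappa>])
  moreover have "R / 3 * inverse (real (Suc (\<kappa> n))) = \<gamma> (\<kappa> n)" for n
    by (simp add: \<gamma>_def field_simps)
  ultimately have "(\<lambda>n. \<gamma> (\<kappa> n)) \<longlonglongrightarrow> 0" by simp
  with \<gamma>_pos \<gamma>_le ev_\<kappa> show ?thesis by blast
qed

text \<open>Achievability for C_p: if every spectrum value I_p(R - gamma) stays below l, then codes
  of rate R - 2 g n, decoded at threshold R - g n, have rate R and error at most l.\<close>
lemma Cp_le_of_Ip_bound:
  assumes ch: "channel X Y W" and P: "P \<in> input_seqs X" and R: "0 < R"
    and L: "(SUP \<gamma>\<in>{0<..}. Ip W P (R - \<gamma>)) < ereal l"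
  shows "Cp X Y W R \<le> ereal l"
proof -
  obtain g where g: "g \<longlonglongrightarrow> 0" and g_bounds: "\<And>n. 0 < g n \<and> g n \<le> R / 3" and ev:
    "eventually (\<lambda>n. Ispec (W n) (P n) n (R - g n) + 2 * exp (real n * (- g n)) < l) sequentially"
    using vanishing_gaps[OF R L] by blast
  define s where "s n = R - 2 * g n" for n
  define t where "t n = R - g n" for n
  have s_nonneg: "0 \<le> s n" for n using g_bounds[of n] R by (simp add: s_def)
  from achievability_codes[where t=t, OF ch P s_nonneg]
  obtain \<Phi> where \<Phi>: "\<Phi> \<in> code_seqs X Y" and \<Phi>_n: "\<forall>n>0. s n \<le> ln (real (code_size (\<Phi> n))) / real n \<and>
           err_prob (W n) (\<Phi> n) \<le> Ispec (W n) (P n) n (t n) + 2 * exp (real n * (s n - t n))"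
    by (rule bexE)
  have "eventually (\<lambda>n. ereal (err_prob (W n) (\<Phi> n)) \<le> ereal l) sequentially"
    using ev eventually_gt_at_top[of 0]
  proof eventually_elim
    case (elim n)
    have "err_prob (W n) (\<Phi> n) \<le> Ispec (W n) (P n) n (R - g n) + 2 * exp (real n * (- g n))"
      using \<Phi>_n elim(2) by (simp add: s_def t_def)
    thus ?case using elim(1) by simp
  qed
  hence "error W \<Phi> \<le> limsup (\<lambda>n. ereal l)" unfolding error_def by (rule Limsup_mono)
  hence err: "error W \<Phi> \<le> ereal l" by (simp add: Limsup_const)
  have "s \<longlonglongrightarrow> R - 2 * 0" unfolding s_def by (intro tendsto_intros g)
  hence rate: "ereal R \<le> rate \<Phi>"
    by (intro rate_ge_of_lower_bound) (use \<Phi>_n in auto)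
  have "Cp X Y W R \<le> error W \<Phi>"
    unfolding Cp_def by (rule Inf_lower) (use \<Phi> rate in blast)
  also note err
  finally show ?thesis .
qed

text \<open>Letting l decrease to the limit of I_p(R - gamma); for R <= 0 the trivial code already
  has error 0.\<close>
lemma Cp_le_Lim_Ip:
  assumes ch: "channel X Y W" and P: "P \<in> input_seqs X"
  shows "Cp X Y W R \<le> Lim (at_right 0) (\<lambda>\<gamma>. Ip W P (R - \<gamma>))"
proof -
  define L where "L = (SUP \<gamma>\<in>{0<..}. Ip W P (R - \<gamma>))"
  have L_nonneg: "0 \<le> L" unfolding L_def
    by (rule order_trans[OF Ip_nonneg SUP_upper[of 1]]) simp
  have "Cp X Y W R \<le> L"
  proof (cases "R \<le> 0")
    case True
    hence "Cp X Y W R \<le> error W (trivial_code X Y)" unfolding Cp_def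
      by (intro Inf_lower) (use trivial_code_seq[OF ch] in auto)
    thus ?thesis using trivial_code_seq[OF ch] L_nonneg by simp
  next
    case False
    show ?thesis
    proof (rule ereal_le_epsilon2)
      fix e :: real assume e: "0 < e"
      show "Cp X Y W R \<le> L + ereal e"
      proof (cases L)
        case (real l)
        have "Cp X Y W R \<le> ereal (l + e)"
          by (rule Cp_le_of_Ip_bound[OF ch P]) (use False real e in \<open>auto simp: L_def\<close>)
        thus ?thesis using real by simp
      qed (use L_nonneg in auto)
    qed
  qed
  thus ?thesis by (simp add: Lim_Ip L_def)
qed

text \<open>Choosing Q = W_P shows that the I-spectrum is one of the J-spectra.\<close>
lemma Lim_Ip_le_SUP_Lim_Jp:
  assumes ch: "channel X Y W" and P: "P \<in> input_seqs X"
  shows "Lim (at_right 0) (\<lambda>\<gamma>. Ip W P (R - \<gamma>))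
      \<le> (SUP Q\<in>output_seqs Y. Lim (at_right 0) (\<lambda>\<gamma>. Jp W P Q (R - \<gamma>)))"
  unfolding Ip_eq_Jp_out_dist by (rule SUP_upper) (rule out_dist_seq[OF ch P])

lemma INF_SUP_Lim_Jp_le_error:
  assumes \<Phi>: "\<Phi> \<in> code_seqs X Y" and rate: "ereal R \<le> rate \<Phi>"
  shows "(INF P\<in>input_seqs X. SUP Q\<in>output_seqs Y. Lim (at_right 0) (\<lambda>\<gamma>. Jp W P Q (R - \<gamma>)))
      \<le> error W \<Phi>"
proof -
  have "Jp W (\<lambda>n. codeword_dist (\<Phi> n)) Q (R - \<gamma>) \<le> error W \<Phi>" if "0 < \<gamma>" for Q \<gamma>
  proof (rule converse_asymptotic[OF \<Phi>])
    have "ereal (R - \<gamma>) < ereal R" using that by simp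
    thus "ereal (R - \<gamma>) < rate \<Phi>" using rate by (rule less_le_trans)
  qed
  hence "(SUP Q\<in>output_seqs Y. Lim (at_right 0) (\<lambda>\<gamma>. Jp W (\<lambda>n. codeword_dist (\<Phi> n)) Q (R - \<gamma>)))
      \<le> error W \<Phi>"
    unfolding Lim_Jp by (intro SUP_least) auto
  thus ?thesis by (rule INF_lower2[OF codeword_dist_seq[OF \<Phi>]])
qed

section \<open>The epsilon-capacity\<close>

text \<open>The trivial code makes rate 0 eps-achievable for every eps >= 0.\<close>
lemma C_eps_nonneg:
  assumes "channel X Y W" "0 \<le> \<epsilon>"
  shows "0 \<le> C_eps X Y W \<epsilon>"
  unfolding C_eps_def by (rule Sup_upper2[of 0]) (use trivial_code_seq[OF assms(1)] assms(2) in auto)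

text \<open>Achievability: if I_p(R) <= eps, every rate R - delta >= 0 is eps-achievable, by
  Feinstein codes of rate R - delta decoded at threshold R.\<close>
lemma achievable_rate_le_C_eps:
  assumes ch: "channel X Y W" and P: "P \<in> input_seqs X" and I: "Ip W P R \<le> ereal \<epsilon>"
    and \<delta>: "0 < \<delta>" "\<delta> \<le> R"
  shows "ereal (R - \<delta>) \<le> C_eps X Y W \<epsilon>"
proof -
  have rate_nonneg: "0 \<le> R - \<delta>" using \<delta> by simp
  from achievability_codes[where s="\<lambda>_. R - \<delta>" and t="\<lambda>_. R", OF ch P rate_nonneg]
  obtain \<Phi> where \<Phi>: "\<Phi> \<in> code_seqs X Y" and \<Phi>_n: "\<forall>n>0. R - \<delta> \<le> ln (real (code_size (\<Phi> n))) / real n \<and>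
       err_prob (W n) (\<Phi> n) \<le> Ispec (W n) (P n) n R + 2 * exp (real n * ((R - \<delta>) - R))"
    by (rule bexE)
  have "eventually (\<lambda>n. ereal (err_prob (W n) (\<Phi> n))
      \<le> ereal (2 * exp (real n * (- \<delta>))) + ereal (Ispec (W n) (P n) n R)) sequentially"
    using eventually_gt_at_top[of 0] by eventually_elim (use \<Phi>_n in \<open>simp add: add.commute\<close>)
  hence "error W \<Phi> \<le> limsup (\<lambda>n. ereal (2 * exp (real n * (- \<delta>))) + ereal (Ispec (W n) (P n) n R))"
    unfolding error_def by (rule Limsup_mono)
  also have "\<dots> = ereal 0 + Ip W P R" unfolding Ip_Ispec
    by (rule ereal_limsup_lim_add) (use exp_decay_LIMSEQ[OF \<delta>(1)] in \<open>auto simp: lim_ereal\<close>)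
  finally have err: "error W \<Phi> \<le> ereal \<epsilon>" using I by (simp add: zero_ereal_def[symmetric])
  have "ereal (R - \<delta>) \<le> rate \<Phi>"
    by (rule rate_ge_of_lower_bound[OF tendsto_const]) (use \<Phi>_n in blast)
  also have "rate \<Phi> \<le> C_eps X Y W \<epsilon>"
    unfolding C_eps_def by (rule Sup_upper) (use \<Phi> err in blast)
  finally show ?thesis .
qed

text \<open>Letting delta -> 0: every threshold R with I_p(R) <= eps is an eps-achievable rate.\<close>
lemma I_eps_le_C_eps:
  assumes ch: "channel X Y W" and P: "P \<in> input_seqs X" and \<epsilon>: "0 \<le> \<epsilon>"
  shows "I_eps W P \<epsilon> \<le> C_eps X Y W \<epsilon>"
  unfolding I_eps_def
proof (rule Sup_least, safe)
  fix R assume I: "Ip W P R \<le> ereal \<epsilon>"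
  show "ereal R \<le> C_eps X Y W \<epsilon>"
  proof (rule ereal_le_epsilon2)
    fix \<delta> :: real assume \<delta>: "0 < \<delta>"
    show "ereal R \<le> C_eps X Y W \<epsilon> + ereal \<delta>"
    proof (cases "\<delta> \<le> R")
      case True
      have "ereal (R - \<delta>) \<le> C_eps X Y W \<epsilon>"
        by (rule achievable_rate_le_C_eps[OF ch P I \<delta> True])
      thus ?thesis using C_eps_nonneg[OF ch \<epsilon>] by (cases "C_eps X Y W \<epsilon>") auto
    next
      case False
      thus ?thesis using C_eps_nonneg[OF ch \<epsilon>] add_mono[of 0 "C_eps X Y W \<epsilon>" "ereal R" "ereal \<delta>"]
        by simp
    qed
  qed
qed

text \<open>Choosing Q = W_P shows that the I-capacity dominates the worst J-capacity.\<close>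
lemma INF_J_eps_le_I_eps:
  assumes ch: "channel X Y W" and P: "P \<in> input_seqs X"
  shows "(INF Q\<in>output_seqs Y. J_eps W P Q \<epsilon>) \<le> I_eps W P \<epsilon>"
  unfolding I_eps_def Ip_eq_Jp_out_dist J_eps_def[symmetric]
  by (rule INF_lower) (rule out_dist_seq[OF ch P])

lemma rate_le_SUP_INF_J_eps:
  assumes \<Phi>: "\<Phi> \<in> code_seqs X Y" and err: "error W \<Phi> \<le> ereal \<epsilon>"
  shows "rate \<Phi> \<le> (SUP P\<in>input_seqs X. INF Q\<in>output_seqs Y. J_eps W P Q \<epsilon>)"
proof -
  have "rate \<Phi> \<le> J_eps W (\<lambda>n. codeword_dist (\<Phi> n)) Q \<epsilon>" for Q
    unfolding J_eps_def le_Sup_iff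
  proof (intro allI impI)
    fix y assume "y < rate \<Phi>"
    then obtain r where r: "y < ereal r" "ereal r < rate \<Phi>"
      using ereal_dense2 by blast
    have "Jp W (\<lambda>n. codeword_dist (\<Phi> n)) Q r \<le> ereal \<epsilon>"
      using converse_asymptotic[OF \<Phi> r(2)] err by (rule order_trans)
    thus "\<exists>a\<in>{ereal R |R. Jp W (\<lambda>n. codeword_dist (\<Phi> n)) Q R \<le> ereal \<epsilon>}. y < a"
      using r(1) by blast
  qed
  hence "rate \<Phi> \<le> (INF Q\<in>output_seqs Y. J_eps W (\<lambda>n. codeword_dist (\<Phi> n)) Q \<epsilon>)"
    by (rule INF_greatest)
  thus ?thesis by (rule SUP_upper2[OF codeword_dist_seq[OF \<Phi>]])
qed

theorem theorem3:
  fixes X :: "nat \<Rightarrow> 'a set" and Y :: "nat \<Rightarrow> 'b set" and W :: "nat \<Rightarrow> 'a \<Rightarrow> 'b pmf"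
  assumes "channel X Y W"
  shows "(\<forall>R::real.
            Cp X Y W R = (INF P\<in>input_seqs X. Lim (at_right (0::real)) (\<lambda>\<gamma>. Ip W P (R - \<gamma>)))
          \<and> Cp X Y W R = (INF P\<in>input_seqs X. SUP Q\<in>output_seqs Y.
                             Lim (at_right (0::real)) (\<lambda>\<gamma>. Jp W P Q (R - \<gamma>))))
       \<and> (\<forall>\<epsilon>::real. 0 \<le> \<epsilon> \<and> \<epsilon> < 1 \<longrightarrow>
            C_eps X Y W \<epsilon> = (SUP P\<in>input_seqs X. I_eps W P \<epsilon>)
          \<and> C_eps X Y W \<epsilon> = (SUP P\<in>input_seqs X. INF Q\<in>output_seqs Y. J_eps W P Q \<epsilon>))"
proof (intro conjI allI impI; (elim conjE)?)
  fix R :: real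
  let ?I = "INF P\<in>input_seqs X. Lim (at_right (0::real)) (\<lambda>\<gamma>. Ip W P (R - \<gamma>))"
  let ?J = "INF P\<in>input_seqs X. SUP Q\<in>output_seqs Y. Lim (at_right (0::real)) (\<lambda>\<gamma>. Jp W P Q (R - \<gamma>))"
  have CI: "Cp X Y W R \<le> ?I" by (rule INF_greatest) (rule Cp_le_Lim_Ip[OF assms])
  have IJ: "?I \<le> ?J" by (rule INF_mono) (use Lim_Ip_le_SUP_Lim_Jp[OF assms] in blast)
  have JC: "?J \<le> Cp X Y W R"
    unfolding Cp_def by (intro Inf_greatest) (auto intro: INF_SUP_Lim_Jp_le_error)
  show "Cp X Y W R = ?I" by (rule antisym[OF CI order_trans[OF IJ JC]])
  show "Cp X Y W R = ?J" by (rule antisym[OF order_trans[OF CI IJ] JC])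
next
  fix \<epsilon> :: real assume \<epsilon>: "0 \<le> \<epsilon>"
  let ?I = "SUP P\<in>input_seqs X. I_eps W P \<epsilon>"
  let ?J = "SUP P\<in>input_seqs X. INF Q\<in>output_seqs Y. J_eps W P Q \<epsilon>"
  have IC: "?I \<le> C_eps X Y W \<epsilon>" by (rule SUP_least) (rule I_eps_le_C_eps[OF assms _ \<epsilon>])
  have JI: "?J \<le> ?I" by (rule SUP_mono) (use INF_J_eps_le_I_eps[OF assms] in blast)
  have CJ: "C_eps X Y W \<epsilon> \<le> ?J"
    unfolding C_eps_def by (intro Sup_least) (auto intro: rate_le_SUP_INF_J_eps)
  show "C_eps X Y W \<epsilon> = ?I" by (rule antisym[OF order_trans[OF CJ JI] IC])
  show "C_eps X Y W \<epsilon> = ?J" by (rule antisym[OF CJ order_trans[OF JI IC]])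
qed

end
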